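(* The set $\mathtt{SUR}$ of surjective cellular automata is closed in $(\mathtt{CA},\delta)$: for every non-surjective $c\in\mathtt{CA}$ there is $\epsilon>0$ such that $\delta(c,d)\ge\epsilon$ for all $d\in\mathtt{SUR}$.
   Context: $\Sigma$ is a finite alphabet with $|\Sigma|\ge2$, $N(r)=[-r,r]$. A cellular automaton (CA) is a map $c:\Sigma^\mathbb{Z}\to\Sigma^\mathbb{Z}$ of the form $c(x)_i=F(x_{[i-r,i+r]})$ for a local function $F:\Sigma^{N(r)}\to\Sigma$. $\mathtt{CA}$ is the set of all CA, $\mathtt{SUR}$ the surjective ones. For $c,d\in\mathtt{CA}$ with common radius $r$, $D^c_d$ is the set of $w\in\Sigma^{N(r)}$ on which the local rules of $c$ and $d$ give different outputs, and $\delta(c,d)=|D^c_d|/|\Sigma|^{2r+1}$ (independent of $r$). *)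

theory Defs
  imports Complex_Main "HOL-Library.FuncSet"
begin

definition nbhd :: "nat \<Rightarrow> int set" where
  "nbhd r = {- int r .. int r}"

definition patterns :: "nat \<Rightarrow> (int \<Rightarrow> 'a) set" where
  "patterns r = PiE (nbhd r) (\<lambda>_. UNIV)"

definition has_radius :: "((int \<Rightarrow> 'a) \<Rightarrow> (int \<Rightarrow> 'a)) \<Rightarrow> nat \<Rightarrow> bool" where
  "has_radius c r \<longleftrightarrow> (\<exists>F :: (int \<Rightarrow> 'a) \<Rightarrow> 'a.
      \<forall>x i. c x i = F (restrict (\<lambda>j. x (i + j)) (nbhd r)))"

definition is_CA :: "((int \<Rightarrow> 'a) \<Rightarrow> (int \<Rightarrow> 'a)) \<Rightarrow> bool" where
  "is_CA c \<longleftrightarrow> (\<exists>r. has_radius c r)"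

text \<open>The local rule of c on a pattern w in patterns r (for r a radius of c) is c(w)_0.\<close>
definition local_rule :: "((int \<Rightarrow> 'a) \<Rightarrow> (int \<Rightarrow> 'a)) \<Rightarrow> (int \<Rightarrow> 'a) \<Rightarrow> 'a" where
  "local_rule c w = c w 0"

definition common_radius :: "((int \<Rightarrow> 'a) \<Rightarrow> (int \<Rightarrow> 'a)) \<Rightarrow> ((int \<Rightarrow> 'a) \<Rightarrow> (int \<Rightarrow> 'a)) \<Rightarrow> nat" where
  "common_radius c d = (LEAST r. has_radius c r \<and> has_radius d r)"

definition disagree :: "nat \<Rightarrow> ((int \<Rightarrow> 'a) \<Rightarrow> (int \<Rightarrow> 'a)) \<Rightarrow> ((int \<Rightarrow> 'a) \<Rightarrow> (int \<Rightarrow> 'a)) \<Rightarrow> (int \<Rightarrow> 'a) set" where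
  "disagree r c d = {w \<in> patterns r. local_rule c w \<noteq> local_rule d w}"

definition delta :: "((int \<Rightarrow> 'a::finite) \<Rightarrow> (int \<Rightarrow> 'a)) \<Rightarrow> ((int \<Rightarrow> 'a) \<Rightarrow> (int \<Rightarrow> 'a)) \<Rightarrow> real" where
  "delta c d = (let r = common_radius c d in
      real (card (disagree r c d)) / real (card (UNIV :: 'a set)) ^ (2 * r + 1))"

end

theory Submission
  imports Defs
begin

(* By compactness of the full shift, c has an orphan: a word u on a
   window [-m, m] that is not the image of any configuration there (finite_orphan).  Let d be
   surjective and R a common radius of c and d.  Surjective CA are balanced from below: u has at
   least q^(2R) preimages under d on [-m-R, m+R], where q = |Sigma| (surjective_many_preimages;
   proved by a tensor-power argument on configurations built from copies of u separated by free
   gap words).  Every such preimage p is mapped by c outside u at some cell of [-m, m], where c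
   and d therefore disagree, so the radius-R window of p at that cell is a disagreement pattern.
   Counting these windows gives q^(2R) <= (2m+1) |D| q^(2m) (orphan_disagreement_count), i.e.
   delta(c, d) = |D| / q^(2R+1) >= 1 / ((2m+1) q^(2m+1)), a bound independent of d and R. *)

lemma has_radius_local:
  assumes "has_radius c r" and "\<forall>t\<in>nbhd r. x (i + t) = x' (i' + t)"
  shows "c x i = c x' i'"
proof -
  obtain F where F: "\<And>x i. c x i = F (restrict (\<lambda>j. x (i + j)) (nbhd r))"
    using assms(1) unfolding has_radius_def by blast
  have "restrict (\<lambda>j. x (i + j)) (nbhd r) = restrict (\<lambda>j. x' (i' + j)) (nbhd r)"
    using assms(2) by (auto intro: restrict_ext)
  then show ?thesis by (simp add: F)
qed

lemma has_radius_local_rule: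
  assumes "has_radius c r"
  shows "c x i = local_rule c (restrict (\<lambda>j. x (i + j)) (nbhd r))"
  unfolding local_rule_def by (rule has_radius_local[OF assms]) simp

lemma has_radius_mono:
  assumes "has_radius c r" and "r \<le> r'"
  shows "has_radius c r'"
proof -
  obtain F where F: "\<And>x i. c x i = F (restrict (\<lambda>j. x (i + j)) (nbhd r))"
    using assms(1) unfolding has_radius_def by blast
  have sub: "nbhd r \<subseteq> nbhd r'" using assms(2) by (auto simp: nbhd_def)
  show ?thesis unfolding has_radius_def
    by (rule exI[of _ "\<lambda>w. F (restrict w (nbhd r))"]) (use sub in \<open>simp add: F Int_absorb1\<close>)
qed

lemma has_radius_common_radius:
  assumes "is_CA c" and "is_CA d"
  shows "has_radius c (common_radius c d)" and "has_radius d (common_radius c d)"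
proof -
  obtain r1 r2 where "has_radius c r1" "has_radius d r2"
    using assms unfolding is_CA_def by blast
  then have "has_radius c (max r1 r2) \<and> has_radius d (max r1 r2)"
    using has_radius_mono by fastforce
  then have "has_radius c (common_radius c d) \<and> has_radius d (common_radius c d)"
    unfolding common_radius_def by (rule LeastI)
  then show "has_radius c (common_radius c d)" and "has_radius d (common_radius c d)"
    by simp_all
qed

lemma finite_unbounded_choice:
  fixes Q :: "'b \<Rightarrow> nat \<Rightarrow> bool"
  assumes "finite V" and "\<And>M. \<exists>v\<in>V. Q v M" and "\<And>v M M'. Q v M \<Longrightarrow> M' \<le> M \<Longrightarrow> Q v M'"
  shows "\<exists>v\<in>V. \<forall>M. Q v M"
proof (rule ccontr)
  assume "\<not> ?thesis"
  then obtain f where f: "\<And>v. v \<in> V \<Longrightarrow> \<not> Q v (f v)" by metis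
  obtain v where v: "v \<in> V" "Q v (Max (f ` V))" using assms(2) by blast
  have "f v \<le> Max (f ` V)" using v(1) assms(1) by simp
  then show False using assms(3)[OF v(2)] f v(1) by blast
qed

lemma window_persists:
  fixes S :: "nat \<Rightarrow> (int \<Rightarrow> 'a::finite) set"
  assumes meets: "\<And>M. S M \<inter> T \<noteq> {}"
    and decreasing: "\<And>M M'. M \<le> M' \<Longrightarrow> S M' \<subseteq> S M"
    and "finite I"
  shows "\<exists>v. \<forall>M. \<exists>x\<in>S M \<inter> T. restrict x I = v"
proof -
  have "finite ((\<lambda>x. restrict x I) ` T)"
    by (rule finite_subset[of _ "PiE I (\<lambda>_. UNIV)"]) (auto intro: finite_PiE \<open>finite I\<close>)
  then have "\<exists>v\<in>(\<lambda>x. restrict x I) ` T. \<forall>M. \<exists>x\<in>S M \<inter> T. restrict x I = v"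
    by (rule finite_unbounded_choice) (use meets decreasing in blast)+
  then show ?thesis by blast
qed

(* Compactness of the full shift (Koenig's lemma): a decreasing sequence of nonempty sets of
   configurations has a configuration X such that each central window of X is seen in every set.
   The windows of X are chosen one radius at a time by dependent choice. *)
lemma decreasing_sets_limit:
  fixes S :: "nat \<Rightarrow> (int \<Rightarrow> 'a::finite) set"
  assumes nonempty: "\<And>M. S M \<noteq> {}"
    and decreasing: "\<And>M M'. M \<le> M' \<Longrightarrow> S M' \<subseteq> S M"
  shows "\<exists>X. \<forall>n M. \<exists>x\<in>S M. \<forall>i\<in>{-int n..int n}. x i = X i"
proof -
  define I where "I n = {-int n..int n}" for n :: nat
  have I_mono: "n \<le> n' \<Longrightarrow> I n \<subseteq> I n'" for n n' unfolding I_def by auto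
  define P where "P n v \<longleftrightarrow> (\<forall>M. \<exists>x\<in>S M. restrict x (I n) = v)" for n v
  have refine: "\<exists>v. \<forall>M. \<exists>x\<in>S M \<inter> T. restrict x (I n) = v"
    if "\<And>M. S M \<inter> T \<noteq> {}" for n T
    unfolding I_def by (rule window_persists[OF that decreasing finite_atLeastAtMost_int])
  have base: "\<exists>v. P 0 v"
    using refine[of UNIV 0] nonempty unfolding P_def by auto
  have step: "\<exists>v'. P (Suc n) v' \<and> restrict v' (I n) = v" if "P n v" for n v
  proof -
    have "S M \<inter> {x. restrict x (I n) = v} \<noteq> {}" for M
      using that unfolding P_def by blast
    then obtain v' where v': "\<forall>M. \<exists>x\<in>S M \<inter> {x. restrict x (I n) = v}. restrict x (I (Suc n)) = v'"
      using refine[of "{x. restrict x (I n) = v}" "Suc n"] by blast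
    then obtain x where "restrict x (I n) = v" "restrict x (I (Suc n)) = v'" by blast
    then have "restrict v' (I n) = v" using I_mono[of n "Suc n"] by (auto simp: Int_absorb1)
    with v' show ?thesis unfolding P_def by blast
  qed
  obtain V where V: "\<And>n. P n (V n)" and V_Suc: "\<And>n. restrict (V (Suc n)) (I n) = V n"
    using dependent_nat_choice[of P "\<lambda>n v v'. restrict v' (I n) = v", OF base step] by blast
  have V_self: "restrict (V n) (I n) = V n" for n
    using V[of n] unfolding P_def by (metis Int_absorb restrict_restrict)
  have V_coherent: "restrict (V n') (I n) = V n" if "n \<le> n'" for n n'
    using that
  proof (induction n' rule: dec_induct)
    case base then show ?case by (rule V_self)
  next
    case (step n')
    have "restrict (V (Suc n')) (I n) = restrict (restrict (V (Suc n')) (I n')) (I n)"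
      using I_mono[OF step.hyps(1)] by (simp add: Int_absorb1)
    with step.IH show ?case by (simp only: V_Suc)
  qed
  define X where "X i = V (nat \<bar>i\<bar>) i" for i
  have X_V: "X i = V n i" if "i \<in> I n" for i n
  proof -
    have "nat \<bar>i\<bar> \<le> n" "i \<in> I (nat \<bar>i\<bar>)" using that unfolding I_def by auto
    then show ?thesis unfolding X_def using V_coherent by (metis restrict_apply')
  qed
  have "\<exists>x\<in>S M. \<forall>i\<in>I n. x i = X i" for n M
  proof -
    obtain x where "x \<in> S M" "restrict x (I n) = V n" using V[of n] unfolding P_def by blast
    then show ?thesis using X_V by (metis restrict_apply')
  qed
  then show ?thesis unfolding I_def by blast
qed

(* A non-surjective CA has an orphan word u on a finite window [-m, m]: no configuration
   is mapped onto u there.  Otherwise compactness builds a preimage of a missed configuration. *)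
lemma finite_orphan:
  fixes c :: "(int \<Rightarrow> 'a::finite) \<Rightarrow> int \<Rightarrow> 'a"
  assumes radius: "has_radius c r" and not_surj: "\<not> surj c"
  shows "\<exists>m::nat. \<exists>u. \<forall>x. \<exists>i\<in>{-int m..int m}. c x i \<noteq> u i"
proof (rule ccontr)
  assume no_orphan: "\<not> ?thesis"
  from not_surj obtain y where y: "y \<notin> range c" by blast
  define S where "S M = {x. \<forall>i\<in>{-int M..int M}. c x i = y i}" for M :: nat
  have "S M \<noteq> {}" for M using no_orphan unfolding S_def by blast
  moreover have "S M' \<subseteq> S M" if "M \<le> M'" for M M' using that unfolding S_def by auto
  ultimately obtain X where X: "\<And>n M. \<exists>x\<in>S M. \<forall>i\<in>{-int n..int n}. x i = X i"
    using decreasing_sets_limit[of S] by blast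
  have "c X i = y i" for i
  proof -
    obtain x where x: "x \<in> S (nat \<bar>i\<bar>)" "\<forall>j\<in>{-int (nat \<bar>i\<bar> + r)..int (nat \<bar>i\<bar> + r)}. x j = X j"
      using X by blast
    have "c X i = c x i"
    proof (rule has_radius_local[OF radius], intro ballI)
      fix t assume "t \<in> nbhd r"
      then have "i + t \<in> {-int (nat \<bar>i\<bar> + r)..int (nat \<bar>i\<bar> + r)}" by (auto simp: nbhd_def)
      then show "X (i + t) = x (i + t)" using x(2) by simp
    qed
    also have "\<dots> = y i"
    proof -
      have "i \<in> {-int (nat \<bar>i\<bar>)..int (nat \<bar>i\<bar>)}" by (simp; arith)
      with x(1) show ?thesis unfolding S_def by blast
    qed
    finally show ?thesis .
  qed
  then have "c X = y" by blast
  with y show False by blast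
qed

lemma power_le_from_tensor_bound:
  fixes a b :: nat
  assumes b_pos: "1 \<le> b" and bound: "\<And>k. b ^ (k - 1) \<le> a ^ k"
  shows "b \<le> a"
proof (rule ccontr)
  assume "\<not> b \<le> a"
  define r where "r = real a / real b"
  have "0 \<le> r" "r < 1" using \<open>\<not> b \<le> a\<close> b_pos unfolding r_def by auto
  then have "(\<lambda>n. r ^ n) \<longlonglongrightarrow> 0" by (intro LIMSEQ_power_zero) simp
  then have "eventually (\<lambda>n. r ^ n < 1 / real b) sequentially"
    by (rule order_tendstoD) (use b_pos in simp)
  then obtain N where "\<forall>n\<ge>N. r ^ n < 1 / real b"
    unfolding eventually_sequentially by blast
  then have small: "r ^ Suc N < 1 / real b" by (meson le_SucI order_refl)
  have b_real_pos: "0 < real b" using b_pos by simp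
  have "real b ^ N \<le> real a ^ Suc N"
    using bound[of "Suc N"] by (metis diff_Suc_1 of_nat_le_iff of_nat_power)
  then have "real b ^ N / (real b * real b ^ N) \<le> real a ^ Suc N / (real b * real b ^ N)"
    using b_real_pos by (intro divide_right_mono) auto
  also have "\<dots> = r ^ Suc N" unfolding r_def by (simp add: power_divide)
  finally have "1 / real b \<le> r ^ Suc N" using b_real_pos by simp
  with small show False by simp
qed

(* Period of the block configuration: a window [-m-R, m+R]. *)
definition block_len :: "nat \<Rightarrow> nat \<Rightarrow> int" where
  "block_len m R = int (2 * (m + R) + 1)"

(* The block configuration repeats the word u on every window [-m, m] + j * block_len m R and
   fills the 2R cells after copy j with the word h j on {1..2R}. *)
definition block_pattern :: "nat \<Rightarrow> nat \<Rightarrow> (int \<Rightarrow> 'a) \<Rightarrow> (nat \<Rightarrow> int \<Rightarrow> 'a) \<Rightarrow> int \<Rightarrow> 'a" where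
  "block_pattern m R u h i =
     (let L = block_len m R; s = (i + int m) mod L
      in if s \<le> 2 * int m then u (s - int m) else h (nat ((i + int m) div L)) (s - 2 * int m))"

lemma block_pattern_word:
  assumes "s \<in> {-int m..int m}"
  shows "block_pattern m R u h (s + int j * block_len m R) = u s"
proof -
  have shift: "s + int j * block_len m R + int m = (s + int m) + int j * block_len m R" by simp
  have "((s + int m) + int j * block_len m R) mod block_len m R = s + int m"
    "((s + int m) + int j * block_len m R) div block_len m R = int j"
    using assms unfolding block_len_def by simp_all
  with assms show ?thesis unfolding block_pattern_def Let_def shift by simp
qed

lemma block_pattern_gap:
  assumes "t \<in> {1..int (2 * R)}"
  shows "block_pattern m R u h (int j * block_len m R + int m + t) = h j t"
proof -
  have shift: "int j * block_len m R + int m + t + int m = (2 * int m + t) + int j * block_len m R"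
    by simp
  have "((2 * int m + t) + int j * block_len m R) mod block_len m R = 2 * int m + t"
    "((2 * int m + t) + int j * block_len m R) div block_len m R = int j"
    using assms unfolding block_len_def by simp_all
  with assms show ?thesis unfolding block_pattern_def Let_def shift by simp
qed

lemma block_decomposition:
  fixes a L i :: int
  assumes "0 < L" and "0 \<le> i + a" and "i + a < int k * L"
  obtains j s where "j < k" and "0 \<le> s + a" and "s + a < L" and "i = s + int j * L"
proof
  define j where "j = (i + a) div L"
  have "0 \<le> j" unfolding j_def using assms(1,2) by (simp add: pos_imp_zdiv_nonneg_iff)
  moreover have "j < int k"
  proof -
    have "j * L \<le> i + a"
      using div_mult_mod_eq[of "i + a" L] pos_mod_sign[OF assms(1), of "i + a"] unfolding j_def by linarith
    with assms(3) have "j * L < int k * L" by linarith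
    with assms(1) show ?thesis by (simp add: mult_less_cancel_right)
  qed
  ultimately show "nat j < k" by simp
  show "0 \<le> (i + a) mod L - a + a" and "(i + a) mod L - a + a < L" using assms(1) by simp_all
  show "i = (i + a) mod L - a + int (nat j) * L"
    using \<open>0 \<le> j\<close> unfolding j_def by (simp add: mod_div_mult_eq[symmetric] algebra_simps)
qed

lemma block_of_preimage:
  assumes radius: "has_radius d R" and image: "d x = block_pattern m R u h"
  shows "restrict (\<lambda>s. x (s + int j * block_len m R)) {-int (m + R)..int (m + R)}
           \<in> {p \<in> PiE {-int (m + R)..int (m + R)} (\<lambda>_. UNIV). \<forall>i\<in>{-int m..int m}. d p i = u i}"
proof -
  let ?p = "restrict (\<lambda>s. x (s + int j * block_len m R)) {-int (m + R)..int (m + R)}"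
  have "d ?p s = u s" if s: "s \<in> {-int m..int m}" for s
  proof -
    have "d ?p s = d x (s + int j * block_len m R)"
    proof (rule has_radius_local[OF radius], intro ballI)
      fix t assume "t \<in> nbhd R"
      with s have "s + t \<in> {-int (m + R)..int (m + R)}" unfolding nbhd_def by auto
      then show "?p (s + t) = x (s + int j * block_len m R + t)" by (simp add: algebra_simps)
    qed
    also have "\<dots> = u s" using image block_pattern_word[OF s] by simp
    finally show ?thesis .
  qed
  then show ?thesis by simp
qed

(* A preimage restricted to k consecutive blocks determines the free words in the k - 1
   gaps between them: the radius-R windows of the gap cells lie inside these blocks. *)
lemma block_pattern_determined:
  fixes x x' :: "int \<Rightarrow> 'a"
  assumes radius: "has_radius d R"
    and images: "d x = block_pattern m R u h" "d x' = block_pattern m R u h'"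
    and blocks_agree: "\<And>j s. j < k \<Longrightarrow> s \<in> {-int (m + R)..int (m + R)} \<Longrightarrow>
           x (s + int j * block_len m R) = x' (s + int j * block_len m R)"
    and j: "Suc j < k" and t: "t \<in> {1..int (2 * R)}"
  shows "h j t = h' j t"
proof -
  define L where "L = block_len m R"
  have L_eq: "L = 2 * int m + 2 * int R + 1" unfolding L_def block_len_def by simp
  have agree: "x i = x' i" if range: "0 \<le> i + int (m + R)" "i + int (m + R) < int k * L" for i
  proof -
    have "0 < L" using L_eq by simp
    then obtain j s where "j < k" "0 \<le> s + int (m + R)" "s + int (m + R) < L" "i = s + int j * L"
      using range by (rule block_decomposition)
    moreover have "s \<in> {-int (m + R)..int (m + R)}" using calculation(2,3) L_eq by auto
    ultimately show ?thesis using blocks_agree unfolding L_def by blast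
  qed
  define i where "i = int j * L + int m + t"
  have "(int j + 2) * L \<le> int k * L" using j L_eq by (intro mult_right_mono) auto
  then have room: "int j * L + 2 * L \<le> int k * L" by (simp add: algebra_simps)
  have "0 \<le> int j * L" using L_eq by simp
  then have "d x i = d x' i"
    using t room L_eq by (intro has_radius_local[OF radius] ballI agree) (auto simp: nbhd_def i_def)
  then show ?thesis
    using images block_pattern_gap[OF t, where h = h] block_pattern_gap[OF t, where h = h']
    unfolding i_def L_def by simp
qed

(* Choosing a preimage of each block configuration gives an injection from the (k - 1)-tuples
   of free words into the k-tuples of local preimages of u. *)
lemma surjective_preimages_tensor_bound:
  fixes d :: "(int \<Rightarrow> 'a::finite) \<Rightarrow> int \<Rightarrow> 'a"
  assumes radius: "has_radius d R" and surj: "surj d"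
  shows "(card (UNIV :: 'a set) ^ (2 * R)) ^ (k - 1)
           \<le> card {p \<in> PiE {-int (m + R)..int (m + R)} (\<lambda>_. UNIV). \<forall>i\<in>{-int m..int m}. d p i = u i} ^ k"
proof -
  define J where "J = {-int (m + R)..int (m + R)}"
  define A where "A = {p \<in> PiE J (\<lambda>_. UNIV). \<forall>i\<in>{-int m..int m}. d p i = u i}"
  define H where "H = PiE {0..<k - 1} (\<lambda>_. PiE {1..int (2 * R)} (\<lambda>_. UNIV :: 'a set))"
  have "\<forall>h. \<exists>x. d x = block_pattern m R u h" using surj by (metis surjD)
  then obtain X where X: "\<And>h. d (X h) = block_pattern m R u h" by metis
  define blocks where
    "blocks h = restrict (\<lambda>j. restrict (\<lambda>s. X h (s + int j * block_len m R)) J) {0..<k}" for h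
  have blocks_A: "blocks h \<in> PiE {0..<k} (\<lambda>_. A)" for h
    unfolding blocks_def A_def J_def using block_of_preimage[OF radius X] by auto
  have "inj_on blocks H"
  proof
    fix h h' assume h: "h \<in> H" and h': "h' \<in> H" and eq: "blocks h = blocks h'"
    have agree: "X h (s + int j * block_len m R) = X h' (s + int j * block_len m R)"
      if "j < k" "s \<in> {-int (m + R)..int (m + R)}" for j s
      using fun_cong[OF fun_cong[OF eq, of j], of s] that unfolding blocks_def J_def by simp
    show "h = h'"
    proof (rule PiE_ext[OF h[unfolded H_def] h'[unfolded H_def]])
      fix j assume j: "j \<in> {0..<k - 1}"
      have "h j \<in> PiE {1..int (2 * R)} (\<lambda>_. UNIV)" "h' j \<in> PiE {1..int (2 * R)} (\<lambda>_. UNIV)"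
        using h h' j unfolding H_def by auto
      then show "h j = h' j"
        by (rule PiE_ext, intro block_pattern_determined[OF radius X X agree]) (use j in auto)
    qed
  qed
  moreover have "finite (PiE {0..<k} (\<lambda>_. A))"
    by (intro finite_PiE finite_subset[of A "PiE J (\<lambda>_. UNIV)"]) (auto simp: A_def J_def)
  ultimately have "card H \<le> card (PiE {0..<k} (\<lambda>_. A))"
    using blocks_A by (intro card_inj_on_le) auto
  moreover have "card H = (card (UNIV :: 'a set) ^ (2 * R)) ^ (k - 1)"
    unfolding H_def by (simp add: card_PiE nat_mult_distrib)
  ultimately show ?thesis by (simp add: card_PiE A_def J_def)
qed

lemma surjective_many_preimages:
  fixes d :: "(int \<Rightarrow> 'a::finite) \<Rightarrow> int \<Rightarrow> 'a"
  assumes "has_radius d R" and "surj d"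
  shows "card (UNIV :: 'a set) ^ (2 * R)
           \<le> card {p \<in> PiE {-int (m + R)..int (m + R)} (\<lambda>_. UNIV). \<forall>i\<in>{-int m..int m}. d p i = u i}"
proof (rule power_le_from_tensor_bound)
  show "1 \<le> card (UNIV :: 'a set) ^ (2 * R)" by (simp add: Suc_le_eq card_gt_0_iff)
  show "(card (UNIV :: 'a set) ^ (2 * R)) ^ (k - 1)
          \<le> card {p \<in> PiE {-int (m + R)..int (m + R)} (\<lambda>_. UNIV). \<forall>i\<in>{-int m..int m}. d p i = u i} ^ k"
    for k using surjective_preimages_tensor_bound[OF assms] .
qed

lemma card_window_in:
  fixes D :: "(int \<Rightarrow> 'a::finite) set"
  assumes J: "finite J" and window: "{i - int R..i + int R} \<subseteq> J" and D: "D \<subseteq> patterns R"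
  shows "card {p \<in> PiE J (\<lambda>_. UNIV). restrict (\<lambda>j. p (i + j)) (nbhd R) \<in> D}
           \<le> card D * card (UNIV :: 'a set) ^ (card J - (2 * R + 1))"
proof -
  define K where "K = {i - int R..i + int R}"
  define B where "B = {p \<in> PiE J (\<lambda>_. UNIV). restrict (\<lambda>j. p (i + j)) (nbhd R) \<in> D}"
  define split where "split p = (restrict (\<lambda>j. p (i + j)) (nbhd R), restrict p (J - K))"
    for p :: "int \<Rightarrow> 'a"
  have "inj_on split B"
  proof
    fix p p' assume p: "p \<in> B" and p': "p' \<in> B" and eq: "split p = split p'"
    show "p = p'"
    proof (rule PiE_ext)
      show "p \<in> PiE J (\<lambda>_. UNIV)" "p' \<in> PiE J (\<lambda>_. UNIV)" using p p' unfolding B_def by auto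
      fix t assume "t \<in> J"
      show "p t = p' t"
      proof (cases "t \<in> K")
        case True
        then have "t - i \<in> nbhd R" unfolding K_def nbhd_def by auto
        then show ?thesis
          using fun_cong[OF arg_cong[OF eq, of fst], of "t - i"] unfolding split_def by simp
      next
        case False
        with \<open>t \<in> J\<close> show ?thesis
          using fun_cong[OF arg_cong[OF eq, of snd], of t] unfolding split_def by simp
      qed
    qed
  qed
  moreover have "split ` B \<subseteq> D \<times> PiE (J - K) (\<lambda>_. UNIV)"
    unfolding split_def B_def by auto
  moreover have "finite D"
    using D unfolding patterns_def nbhd_def by (rule finite_subset) (intro finite_PiE; simp)
  then have "finite (D \<times> PiE (J - K) (\<lambda>_. UNIV :: 'a set))"
    using J by (intro finite_cartesian_product finite_PiE) auto
  ultimately have "card B \<le> card (D \<times> PiE (J - K) (\<lambda>_. UNIV :: 'a set))"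
    by (rule card_inj_on_le)
  moreover have "card (J - K) = card J - (2 * R + 1)"
    using window unfolding K_def by (subst card_Diff_subset) auto
  ultimately show ?thesis
    using J unfolding B_def by (simp add: card_cartesian_product card_PiE)
qed

(* Key estimate: every local preimage of the orphan u of c under the surjective d must exhibit
   a disagreement pattern of c and d at one of the 2m + 1 cells of [-m, m]. *)
lemma orphan_disagreement_count:
  fixes c d :: "(int \<Rightarrow> 'a::finite) \<Rightarrow> int \<Rightarrow> 'a"
  assumes c: "has_radius c R" and d: "has_radius d R" and surj: "surj d"
    and orphan: "\<And>x. \<exists>i\<in>{-int m..int m}. c x i \<noteq> u i"
  shows "card (UNIV :: 'a set) ^ (2 * R)
           \<le> (2 * m + 1) * (card (disagree R c d) * card (UNIV :: 'a set) ^ (2 * m))"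
proof -
  define q where "q = card (UNIV :: 'a set)"
  define J where "J = {-int (m + R)..int (m + R)}"
  define A where "A = {p \<in> PiE J (\<lambda>_. UNIV). \<forall>i\<in>{-int m..int m}. d p i = u i}"
  define B where "B i = {p \<in> PiE J (\<lambda>_. UNIV). restrict (\<lambda>j. p (i + j)) (nbhd R) \<in> disagree R c d}"
    for i
  have "A \<subseteq> (\<Union>i\<in>{-int m..int m}. B i)"
  proof
    fix p assume p: "p \<in> A"
    obtain i where i: "i \<in> {-int m..int m}" "c p i \<noteq> u i" using orphan by blast
    with p have "c p i \<noteq> d p i" unfolding A_def by auto
    then have "restrict (\<lambda>j. p (i + j)) (nbhd R) \<in> disagree R c d"
      unfolding disagree_def patterns_def
      by (simp add: has_radius_local_rule[OF c, of p i] has_radius_local_rule[OF d, of p i])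
    with p i(1) show "p \<in> (\<Union>i\<in>{-int m..int m}. B i)" unfolding A_def B_def by blast
  qed
  moreover have "finite (B i)" for i
    by (rule finite_subset[of _ "PiE J (\<lambda>_. UNIV)"]) (auto simp: B_def J_def intro: finite_PiE)
  ultimately have "card A \<le> card (\<Union>i\<in>{-int m..int m}. B i)"
    by (intro card_mono) auto
  also have "\<dots> \<le> (\<Sum>i\<in>{-int m..int m}. card (B i))" by (rule card_UN_le) simp
  also have "\<dots> \<le> (\<Sum>i\<in>{-int m..int m}. card (disagree R c d) * q ^ (2 * m))"
  proof (rule sum_mono)
    fix i :: int assume "i \<in> {-int m..int m}"
    then have "card (B i) \<le> card (disagree R c d) * q ^ (card J - (2 * R + 1))"
      unfolding B_def q_def
      by (intro card_window_in) (auto simp: J_def disagree_def)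
    moreover have "card J - (2 * R + 1) = 2 * m" unfolding J_def by simp
    ultimately show "card (B i) \<le> card (disagree R c d) * q ^ (2 * m)" by simp
  qed
  also have "\<dots> = (2 * m + 1) * (card (disagree R c d) * q ^ (2 * m))"
    by (simp add: nat_add_distrib nat_mult_distrib)
  finally show ?thesis
    using surjective_many_preimages[OF d surj, of m u] unfolding A_def J_def q_def by linarith
qed

lemma inverse_bound_from_count:
  fixes q N m R :: nat
  assumes "1 \<le> q" and "q ^ (2 * R) \<le> (2 * m + 1) * (N * q ^ (2 * m))"
  shows "1 / (real (2 * m + 1) * real q ^ (2 * m + 1)) \<le> real N / real q ^ (2 * R + 1)"
proof -
  define a where "a = real (2 * m + 1) * real q ^ (2 * m + 1)"
  define b where "b = real q ^ (2 * R + 1)"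
  have "q ^ (2 * R + 1) \<le> N * ((2 * m + 1) * q ^ (2 * m + 1))"
    using mult_le_mono2[OF assms(2), of q] by (simp add: algebra_simps)
  then have "b \<le> real N * a" unfolding a_def b_def
    by (metis of_nat_le_iff of_nat_mult of_nat_power)
  moreover have "0 < a" "0 < b" using assms(1) unfolding a_def b_def by simp_all
  ultimately have "1 / a \<le> real N / b" by (simp add: divide_simps)
  then show ?thesis unfolding a_def b_def .
qed

theorem theorem4p2:
  fixes c :: "(int \<Rightarrow> 'a::finite) \<Rightarrow> (int \<Rightarrow> 'a)"
  assumes "card (UNIV :: 'a set) \<ge> 2"
    and "is_CA c"
    and "\<not> surj c"
  shows "\<exists>\<epsilon>>0. \<forall>d :: (int \<Rightarrow> 'a) \<Rightarrow> (int \<Rightarrow> 'a). is_CA d \<and> surj d \<longrightarrow> delta c d \<ge> \<epsilon>"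
proof -
  define q where "q = card (UNIV :: 'a set)"
  have q: "1 \<le> q" using assms(1) unfolding q_def by simp
  obtain r where "has_radius c r" using assms(2) unfolding is_CA_def by blast
  then obtain m :: nat and u where orphan: "\<And>x. \<exists>i\<in>{-int m..int m}. c x i \<noteq> u i"
    using finite_orphan[OF _ assms(3)] by blast
  define \<epsilon> where "\<epsilon> = 1 / (real (2 * m + 1) * real q ^ (2 * m + 1))"
  have "\<epsilon> \<le> delta c d" if d: "is_CA d" "surj d" for d :: "(int \<Rightarrow> 'a) \<Rightarrow> (int \<Rightarrow> 'a)"
  proof -
    define R where "R = common_radius c d"
    have "q ^ (2 * R) \<le> (2 * m + 1) * (card (disagree R c d) * q ^ (2 * m))"
      unfolding q_def R_def
      by (rule orphan_disagreement_count[OF has_radius_common_radius[OF assms(2) d(1)] d(2) orphan])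
    with q show ?thesis
      unfolding \<epsilon>_def delta_def Let_def R_def[symmetric] q_def[symmetric]
      by (rule inverse_bound_from_count)
  qed
  moreover have "\<epsilon> > 0" unfolding \<epsilon>_def using q by simp
  ultimately show ?thesis by blast
qed

end
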